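(* Suppose that $\nabla^2\Phi(\tilde{\mathbf{x}})$ is positive definite for every $\tilde{\mathbf{x}}\in\Delta$. Then a point $\mathbf{x}\in\Delta$ is a local maximizer of the problem $\max\{f(\mathbf{x}):\mathbf{x}\in\Delta\}$ if and only if $\mathbf{x}=\mathbf{x}(C)$ for some maximal clique $C$ of $G$. Moreover, every local maximizer of this problem is strict.
   Context: Let $G=(\mathcal{V},\mathcal{E})$ be a simple undirected graph on vertex set $\mathcal{V}=\{1,\dots,n\}$ with adjacency matrix $\mathbf{A}=(a_{ij})$ ($a_{ij}=1$ if $(i,j)\in\mathcal{E}$, else $0$; $a_{ii}=0$). A clique is a subset $C\subseteq\mathcal{V}$ with $(i,j)\in\mathcal{E}$ for all distinct $i,j\in C$; it is maximal if it is not strictly contained in another clique. Let $\Delta=\{\mathbf{x}\in\mathbb{R}^n:\mathbf{0}\le\mathbf{x}\le\mathbf{1},\ \mathbf{1}^{\mathsf T}\mathbf{x}=1\}$. For a non-empty clique $C$, $\mathbf{x}(C)\in\Delta$ has $x(C)_i=1/|C|$ for $i\in C$ and $0$ otherwise. For $\mathbf{x}\in\Delta$, $\mathcal{P}(\mathbf{x})$ is the set of vectors in $\Delta$ obtained by permuting the coordinates of $\mathbf{x}$. Let $\Phi:X\to\mathbb{R}$ be twice continuously differentiable on an open set $X\supset\Delta$, satisfying for every $\mathbf{x}\in\Delta$: (C1) $\nabla^2\Phi(\mathbf{x})$ is positive semidefinite; (C2) $\|\nabla^2\Phi(\mathbf{x})\|_2<2$; (C3) $\Phi$ is constant on $\mathcal{P}(\mathbf{x})$.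 Define $f(\mathbf{x})=\mathbf{x}^{\mathsf T}\mathbf{A}\mathbf{x}+\Phi(\mathbf{x})$. A point $\mathbf{x}\in\Delta$ is a (strict) local maximizer if there is $\epsilon>0$ with $f(\mathbf{x})\ge f(\tilde{\mathbf{x}})$ (resp. $>$) for all $\tilde{\mathbf{x}}\in\Delta$ with $0<\|\tilde{\mathbf{x}}-\mathbf{x}\|_2<\epsilon$. *)

theory Defs
  imports "HOL-Analysis.Analysis"
begin

text \<open>Vertices are the elements of a finite type 'n (standing for {1..n});
  the graph is given by a symmetric, irreflexive edge relation E.\<close>

definition simple_graph :: "('n \<Rightarrow> 'n \<Rightarrow> bool) \<Rightarrow> bool" where
  "simple_graph E \<longleftrightarrow> (\<forall>i j. E i j = E j i) \<and> (\<forall>i. \<not> E i i)"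

definition adj_matrix :: "('n::finite \<Rightarrow> 'n \<Rightarrow> bool) \<Rightarrow> real^'n^'n" where
  "adj_matrix E = (\<chi> i j. if E i j then 1 else 0)"

definition is_clique :: "('n \<Rightarrow> 'n \<Rightarrow> bool) \<Rightarrow> 'n set \<Rightarrow> bool" where
  "is_clique E C \<longleftrightarrow> (\<forall>i\<in>C. \<forall>j\<in>C. i \<noteq> j \<longrightarrow> E i j)"

definition maximal_clique :: "('n \<Rightarrow> 'n \<Rightarrow> bool) \<Rightarrow> 'n set \<Rightarrow> bool" where
  "maximal_clique E C \<longleftrightarrow> is_clique E C \<and> \<not> (\<exists>D. is_clique E D \<and> C \<subset> D)"

definition std_simplex :: "(real^'n::finite) set" where
  "std_simplex = {x. (\<forall>i. 0 \<le> x$i \<and> x$i \<le> 1) \<and> (\<Sum>i\<in>UNIV. x$i) = 1}"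

definition clique_vec :: "'n set \<Rightarrow> real^'n::finite" where
  "clique_vec C = (\<chi> i. if i \<in> C then 1 / real (card C) else 0)"

definition perm_vec :: "('n \<Rightarrow> 'n) \<Rightarrow> real^'n::finite \<Rightarrow> real^'n" where
  "perm_vec \<sigma> x = (\<chi> i. x $ (\<sigma> i))"

definition local_max_on :: "(real^'n::finite \<Rightarrow> real) \<Rightarrow> (real^'n) set \<Rightarrow> real^'n \<Rightarrow> bool" where
  "local_max_on f S x \<longleftrightarrow> x \<in> S \<and>
     (\<exists>e>0. \<forall>y\<in>S. 0 < norm (y - x) \<and> norm (y - x) < e \<longrightarrow> f x \<ge> f y)"

definition strict_local_max_on :: "(real^'n::finite \<Rightarrow> real) \<Rightarrow> (real^'n) set \<Rightarrow> real^'n \<Rightarrow> bool" where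
  "strict_local_max_on f S x \<longleftrightarrow> x \<in> S \<and>
     (\<exists>e>0. \<forall>y\<in>S. 0 < norm (y - x) \<and> norm (y - x) < e \<longrightarrow> f x > f y)"

end

theory Submission
  imports Defs
begin

(* Write A for the adjacency matrix. If T is a clique and d vanishes outside T, then
   d' A d = (1'd)^2 - |d|^2, so on the face of the simplex spanned by T the objective
   x' A x + \<Phi> x is strictly concave, because the Hessian of \<Phi> is below 2 I; a local
   maximizer is therefore the unique maximizer on such a face and, \<Phi> being invariant under
   coordinate permutations, is fixed by every transposition of T, i.e. it is the barycentre
   x(T). The support of a local maximizer is a clique: along e_i - e_j for non-adjacent i, j
   the quadratic part vanishes and \<Phi> is strictly convex. Conversely, at x(C) for a maximal
   clique C the symmetry of \<Phi> makes the gradient of the objective constant on C and strictly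
   smaller outside C, since every outside vertex misses a vertex of C; together with the
   concavity on the face this first-order gap makes x(C) a strict local maximizer. *)

lemma std_simplex_iff: "x \<in> std_simplex \<longleftrightarrow> (\<forall>i. 0 \<le> x$i) \<and> (\<Sum>i\<in>UNIV. x$i) = 1"
proof
  assume "(\<forall>i. 0 \<le> x$i) \<and> (\<Sum>i\<in>UNIV. x$i) = 1"
  moreover have "x$i \<le> (\<Sum>i\<in>UNIV. x$i)" if "\<forall>i. 0 \<le> x$i" for i
    using that by (intro member_le_sum) auto
  ultimately show "x \<in> std_simplex" by (auto simp: std_simplex_def)
qed (auto simp: std_simplex_def)

lemma sum_std_simplex: "x \<in> std_simplex \<Longrightarrow> (\<Sum>i\<in>UNIV. x$i) = 1"
  and std_simplex_nonneg: "x \<in> std_simplex \<Longrightarrow> 0 \<le> x$i"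
  by (auto simp: std_simplex_def)

lemma sum_diff_std_simplex:
  "x \<in> std_simplex \<Longrightarrow> y \<in> std_simplex \<Longrightarrow> (\<Sum>i\<in>UNIV. (y - x)$i) = 0"
  by (simp add: sum_subtractf sum_std_simplex)

lemma convex_std_simplex: "convex std_simplex"
  unfolding convex_def
  by (auto simp: std_simplex_iff sum.distrib sum_distrib_left[symmetric])

lemma perm_vec_in_std_simplex:
  assumes "\<sigma> permutes UNIV" "x \<in> std_simplex"
  shows "perm_vec \<sigma> x \<in> std_simplex"
  using assms sum.permute[OF assms(1), of "\<lambda>i. x$i"]
  by (simp add: std_simplex_iff perm_vec_def o_def)

lemma clique_vec_in_std_simplex:
  assumes "C \<noteq> {}"
  shows "clique_vec C \<in> std_simplex"
  using assms by (simp add: std_simplex_iff clique_vec_def sum.If_cases)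

lemma std_simplex_support_nonempty:
  assumes "x \<in> std_simplex"
  shows "{i. x$i \<noteq> 0} \<noteq> {}"
proof
  assume "{i. x$i \<noteq> 0} = {}"
  then have "(\<Sum>k\<in>UNIV. x$k) = 0" by simp
  then show False using sum_std_simplex[OF assms] by simp
qed

lemma std_simplex_constant_on_support:
  assumes x: "x \<in> std_simplex" and const: "\<And>i j. x$i \<noteq> 0 \<Longrightarrow> x$j \<noteq> 0 \<Longrightarrow> x$i = x$j"
  shows "x = clique_vec {i. x$i \<noteq> 0}"
proof -
  define S where "S = {i. x$i \<noteq> 0}"
  obtain i0 where i0: "i0 \<in> S" using std_simplex_support_nonempty[OF x] by (auto simp: S_def)
  have "(\<Sum>k\<in>UNIV. x$k) = (\<Sum>k\<in>S. x$k)"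
    by (rule sum.mono_neutral_right) (auto simp: S_def)
  then have "1 = (\<Sum>k\<in>S. x$k)" using sum_std_simplex[OF x] by simp
  also have "\<dots> = (\<Sum>k\<in>S. x$i0)"
  proof (rule sum.cong[OF refl])
    show "x$k = x$i0" if "k \<in> S" for k using const[of k i0] that i0 by (simp add: S_def)
  qed
  finally have "1 = real (card S) * x$i0" by simp
  moreover have "card S \<noteq> 0" using i0 by auto
  ultimately have entry: "x$i0 = 1 / real (card S)" by (simp add: field_simps)
  have "x$k = clique_vec S $ k" for k
  proof (cases "k \<in> S")
    case True
    then show ?thesis using const[of k i0] i0 entry by (simp add: clique_vec_def S_def)
  qed (simp add: clique_vec_def S_def)
  then have "x = clique_vec S" by (simp add: vec_eq_iff)
  then show ?thesis by (simp only: S_def)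
qed

lemma axis_diff_in_std_simplex:
  assumes "x \<in> std_simplex" "i \<noteq> j" "\<bar>s\<bar> \<le> x$i" "\<bar>s\<bar> \<le> x$j"
  shows "x + s *\<^sub>R (axis i 1 - axis j 1) \<in> std_simplex"
proof -
  have s: "- x$i \<le> s" "s \<le> x$i" "- x$j \<le> s" "s \<le> x$j" using assms(3,4) by auto
  have "0 \<le> x$k + s * (axis i 1 - axis j 1 :: real^_)$k" for k
    using s assms(2) std_simplex_nonneg[OF assms(1), of k]
    by (cases "k = i"; cases "k = j") (simp_all add: axis_def)
  moreover have "(\<Sum>k\<in>UNIV. (axis i 1 - axis j 1 :: real^_)$k) = 0"
    by (simp add: sum_subtractf axis_def)
  ultimately show ?thesis
    using sum_std_simplex[OF assms(1)]
    by (simp add: std_simplex_iff sum.distrib sum_distrib_left[symmetric])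
qed

lemma second_order_mean_value:
  fixes \<Phi> :: "'a::real_inner \<Rightarrow> real" and grad :: "'a \<Rightarrow> 'a" and hess :: "'a \<Rightarrow> 'a \<Rightarrow> 'a"
  assumes grad: "\<And>z. z \<in> closed_segment x y \<Longrightarrow> (\<Phi> has_derivative (\<lambda>h. grad z \<bullet> h)) (at z)"
    and hess: "\<And>z. z \<in> closed_segment x y \<Longrightarrow> (grad has_derivative hess z) (at z)"
  shows "\<exists>\<xi>\<in>closed_segment x y. \<Phi> y = \<Phi> x + grad x \<bullet> (y - x) + (y - x) \<bullet> hess \<xi> (y - x) / 2"
proof -
  define d where "d = y - x"
  define p where "p t = x + t *\<^sub>R d" for t :: real
  define diff where "diff m t = (if m = 0 then \<Phi> (p t) else if m = 1 then grad (p t) \<bullet> d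
    else d \<bullet> hess (p t) d)" for m :: nat and t :: real
  have diff01: "diff 0 = (\<lambda>t. \<Phi> (p t))" "diff 1 = (\<lambda>t. grad (p t) \<bullet> d)"
    by (simp_all add: fun_eq_iff diff_def)
  have seg: "p t \<in> closed_segment x y" if "0 \<le> t" "t \<le> 1" for t
    using that unfolding in_segment p_def d_def by (intro exI[of _ t]) (simp add: algebra_simps)
  have p_deriv: "(p has_derivative (\<lambda>h. h *\<^sub>R d)) (at t)" for t
    unfolding p_def by (auto intro!: derivative_eq_intros)
  have D0: "DERIV (diff 0) t :> diff 1 t" if "0 \<le> t" "t \<le> 1" for t
    using has_derivative_compose[OF p_deriv grad[OF seg[OF that]]]
    unfolding has_field_derivative_def diff01 by (simp add: o_def mult.commute[of _ "grad _ \<bullet> _"])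
  have D1: "DERIV (diff 1) t :> diff 2 t" if "0 \<le> t" "t \<le> 1" for t
  proof -
    have lin: "linear (hess (p t))"
      using has_derivative_bounded_linear[OF hess[OF seg[OF that]]] bounded_linear.linear by blast
    have "((\<lambda>t. grad (p t) \<bullet> d) has_derivative (\<lambda>h. hess (p t) (h *\<^sub>R d) \<bullet> d)) (at t)"
      using has_derivative_compose[OF p_deriv hess[OF seg[OF that]]]
      by (auto intro!: derivative_eq_intros simp: o_def)
    then show ?thesis
      unfolding has_field_derivative_def diff01
      by (simp add: diff_def linear_scale[OF lin] inner_commute mult.commute[of _ "d \<bullet> _"])
  qed
  have "\<forall>m t. m < 2 \<and> 0 \<le> t \<and> t \<le> 1 \<longrightarrow> DERIV (diff m) t :> diff (Suc m) t"
    using D0 D1 by (auto simp: numeral_2_eq_2 less_Suc_eq)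
  then obtain t where t: "0 < t" "t < 1"
    and taylor: "diff 0 1 = (\<Sum>m<2. diff m 0 / fact m * (1 - 0) ^ m) + diff 2 t / fact 2 * (1 - 0) ^ 2"
    using Taylor_up[of 2 diff "diff 0" 0 1 0] by auto
  show ?thesis
    using seg[of t] t taylor by (intro bexI[of _ "p t"]) (auto simp: diff_def p_def d_def numeral_2_eq_2)
qed

lemma adj_matrix_nth: "adj_matrix E $ i $ j = (if E i j then 1 else 0)"
  by (simp add: adj_matrix_def)

lemma inner_matrix_vector_sum:
  fixes A :: "real^'n::finite^'n"
  shows "u \<bullet> (A *v v) = (\<Sum>i\<in>UNIV. \<Sum>j\<in>UNIV. u$i * A$i$j * v$j)"
  by (simp add: inner_vec_def matrix_vector_mult_def sum_distrib_left mult.assoc)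

lemma inner_adj_matrix_commute:
  assumes "simple_graph E"
  shows "u \<bullet> (adj_matrix E *v v) = v \<bullet> (adj_matrix E *v u)"
proof -
  have "transpose (adj_matrix E) = adj_matrix E"
    using assms by (simp add: vec_eq_iff transpose_def adj_matrix_nth simple_graph_def)
  then show ?thesis
    by (metis dot_lmul_matrix inner_commute vector_transpose_matrix)
qed

lemma adj_quadratic_expand:
  assumes "simple_graph E"
  shows "y \<bullet> (adj_matrix E *v y) = x \<bullet> (adj_matrix E *v x) + 2 * ((adj_matrix E *v x) \<bullet> (y - x))
           + (y - x) \<bullet> (adj_matrix E *v (y - x))"
proof -
  have "y \<bullet> (adj_matrix E *v y) = (x + (y - x)) \<bullet> (adj_matrix E *v (x + (y - x)))" by simp
  also have "\<dots> = x \<bullet> (adj_matrix E *v x) + x \<bullet> (adj_matrix E *v (y - x))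
      + (y - x) \<bullet> (adj_matrix E *v x) + (y - x) \<bullet> (adj_matrix E *v (y - x))"
    by (simp only: matrix_vector_right_distrib inner_add_left inner_add_right add.assoc)
  finally show ?thesis
    using inner_adj_matrix_commute[OF assms, of x "y - x"] by (simp add: inner_commute)
qed

lemma adj_quadratic_on_clique:
  assumes "simple_graph E" "is_clique E T" "\<forall>k. k \<notin> T \<longrightarrow> d$k = 0"
  shows "d \<bullet> (adj_matrix E *v d) = (\<Sum>i\<in>UNIV. d$i)\<^sup>2 - d \<bullet> d"
proof -
  have "d$i * adj_matrix E $ i $ j * d$j = d$i * d$j - (if i = j then d$i * d$j else 0)" for i j
    using assms by (cases "i \<in> T \<and> j \<in> T") (auto simp: adj_matrix_nth is_clique_def simple_graph_def)
  then have "d \<bullet> (adj_matrix E *v d) = (\<Sum>i\<in>UNIV. \<Sum>j\<in>UNIV. d$i * d$j) - (\<Sum>i\<in>UNIV. d$i * d$i)"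
    by (simp add: inner_matrix_vector_sum sum_subtractf)
  then show ?thesis
    by (simp add: power2_eq_square sum_product inner_vec_def)
qed

lemma adj_quadratic_on_independent_set:
  assumes "\<And>k l. d$k \<noteq> 0 \<Longrightarrow> d$l \<noteq> 0 \<Longrightarrow> \<not> E k l"
  shows "d \<bullet> (adj_matrix E *v d) = 0"
proof -
  have zero: "d$i * adj_matrix E $ i $ j * d$j = 0" for i j
    using assms[of i j] by (auto simp: adj_matrix_nth)
  show ?thesis by (simp add: inner_matrix_vector_sum zero)
qed

lemma adj_quadratic_clique_bound:
  assumes "simple_graph E" "is_clique E C"
  shows "d \<bullet> (adj_matrix E *v d) + d \<bullet> d
    \<le> (\<Sum>l\<in>C. d$l)\<^sup>2 + 2 * (\<Sum>l\<in>-C. \<bar>d$l\<bar>) * (\<Sum>l\<in>UNIV. \<bar>d$l\<bar>)"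
proof -
  define dc where "dc l = (if l \<in> C then d$l else 0)" for l
  define do where "do l = (if l \<in> C then 0 else \<bar>d$l\<bar>)" for l
  define a where "a i j = adj_matrix E $ i $ j + (if i = j then 1 else 0)" for i j
  have "d$i * a i j * d$j \<le> dc i * dc j + do i * \<bar>d$j\<bar> + \<bar>d$i\<bar> * do j" for i j
  proof (cases "i \<in> C \<and> j \<in> C")
    case True
    then show ?thesis
      using assms by (auto simp: dc_def do_def a_def adj_matrix_nth is_clique_def simple_graph_def)
  next
    case False
    have a_bounds: "0 \<le> a i j" "a i j \<le> 1"
      using assms(1) by (auto simp: a_def adj_matrix_nth simple_graph_def)
    then have "a i j * (d$i * d$j) \<le> a i j * \<bar>d$i * d$j\<bar>"
      by (intro mult_left_mono) auto
    also have "\<dots> \<le> \<bar>d$i * d$j\<bar>"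
      using a_bounds by (intro mult_left_le_one_le) auto
    finally have "d$i * a i j * d$j \<le> \<bar>d$i * d$j\<bar>"
      by (simp add: algebra_simps)
    also have "\<dots> \<le> dc i * dc j + do i * \<bar>d$j\<bar> + \<bar>d$i\<bar> * do j"
      using False by (auto simp: dc_def do_def abs_mult)
    finally show ?thesis .
  qed
  then have "(\<Sum>i\<in>UNIV. \<Sum>j\<in>UNIV. d$i * a i j * d$j)
      \<le> (\<Sum>i\<in>UNIV. \<Sum>j\<in>UNIV. dc i * dc j + do i * \<bar>d$j\<bar> + \<bar>d$i\<bar> * do j)"
    by (intro sum_mono)
  also have "\<dots> = (\<Sum>l\<in>UNIV. dc l)\<^sup>2 + 2 * (\<Sum>l\<in>UNIV. do l) * (\<Sum>l\<in>UNIV. \<bar>d$l\<bar>)"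
    by (simp add: sum.distrib sum_product[symmetric] power2_eq_square)
  also have "(\<Sum>i\<in>UNIV. \<Sum>j\<in>UNIV. d$i * a i j * d$j) = d \<bullet> (adj_matrix E *v d) + d \<bullet> d"
  proof -
    have "d$i * a i j * d$j = d$i * adj_matrix E $ i $ j * d$j + (if i = j then d$i * d$j else 0)" for i j
      by (simp add: a_def algebra_simps)
    then show ?thesis
      unfolding inner_matrix_vector_sum by (simp add: sum.distrib inner_vec_def)
  qed
  finally show ?thesis
    by (simp add: dc_def do_def sum.If_cases Compl_eq)
qed

lemma adj_matrix_clique_vec:
  "(adj_matrix E *v clique_vec C) $ l = real (card {j\<in>C. E l j}) / real (card C)"
proof -
  have "(adj_matrix E *v clique_vec C) $ l = (\<Sum>j\<in>UNIV. if j \<in> {j\<in>C. E l j} then 1 / real (card C) else 0)"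
    unfolding matrix_vector_mult_def vec_lambda_beta
    by (intro sum.cong) (auto simp: adj_matrix_nth clique_vec_def)
  also have "\<dots> = (\<Sum>j\<in>{j\<in>C. E l j}. 1 / real (card C))"
    using sum.inter_restrict[of UNIV "\<lambda>_. 1 / real (card C)" "{j\<in>C. E l j}"] by simp
  finally show ?thesis by simp
qed

lemma card_neighbours_in_clique:
  fixes C :: "'n::finite set"
  assumes "simple_graph E" "is_clique E C" "l \<in> C"
  shows "card {j\<in>C. E l j} = card C - 1"
proof -
  have "{j\<in>C. E l j} = C - {l}"
    using assms by (auto simp: is_clique_def simple_graph_def)
  then show ?thesis using assms(3) by simp
qed

lemma card_neighbours_missing:
  fixes C :: "'n::finite set"
  assumes "m \<in> C" "\<not> E l m"
  shows "card {j\<in>C. E l j} \<le> card C - 1"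
proof -
  have "card {j\<in>C. E l j} \<le> card (C - {m})"
    using assms by (intro card_mono) auto
  then show ?thesis using assms(1) by simp
qed

lemma maximal_clique_nonempty:
  assumes "maximal_clique E C"
  shows "C \<noteq> {}"
proof
  assume "C = {}"
  then have "is_clique E {a} \<and> C \<subset> {a}" for a by (auto simp: is_clique_def)
  then show False using assms by (auto simp: maximal_clique_def)
qed

lemma inner_le_of_gap:
  fixes g d :: "real^'n::finite"
  assumes "\<And>l. l \<in> C \<Longrightarrow> g$l = \<mu>" "\<And>k. k \<notin> C \<Longrightarrow> g$k \<le> \<mu> - \<delta>" "\<And>k. k \<notin> C \<Longrightarrow> 0 \<le> d$k"
  shows "g \<bullet> d \<le> \<mu> * (\<Sum>l\<in>UNIV. d$l) - \<delta> * (\<Sum>l\<in>-C. d$l)"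
proof -
  have "g$l * d$l \<le> \<mu> * d$l - (if l \<in> C then 0 else \<delta> * d$l)" for l
    using assms(1)[of l] mult_right_mono[OF assms(2,3), of l] by (cases "l \<in> C") (auto simp: algebra_simps)
  then have "g \<bullet> d \<le> (\<Sum>l\<in>UNIV. \<mu> * d$l - (if l \<in> C then 0 else \<delta> * d$l))"
    unfolding inner_vec_def by (intro sum_mono) simp
  also have "\<dots> = \<mu> * (\<Sum>l\<in>UNIV. d$l) - \<delta> * (\<Sum>l\<in>-C. d$l)"
    by (simp add: sum_subtractf sum_distrib_left sum.If_cases Compl_eq)
  finally show ?thesis .
qed

definition simplex_face :: "'n set \<Rightarrow> (real^'n::finite) set" where
  "simplex_face T = {x \<in> std_simplex. \<forall>k. k \<notin> T \<longrightarrow> x$k = 0}"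

lemma convex_simplex_face: "convex (simplex_face T)"
  using convex_std_simplex unfolding convex_def simplex_face_def by auto

lemma simplex_face_subset: "simplex_face T \<subseteq> std_simplex"
  by (auto simp: simplex_face_def)

lemma strict_local_max_imp_local_max:
  "strict_local_max_on f S x \<Longrightarrow> local_max_on f S x"
  unfolding strict_local_max_on_def local_max_on_def by (meson less_imp_le)

lemma local_max_on_subset:
  "local_max_on f S x \<Longrightarrow> x \<in> T \<Longrightarrow> T \<subseteq> S \<Longrightarrow> local_max_on f T x"
  unfolding local_max_on_def by blast

lemma local_max_on_imp_max_of_strict_tangent:
  fixes f :: "real^'n::finite \<Rightarrow> real"
  assumes S: "convex S" and lm: "local_max_on f S x"
    and tangent: "\<And>u v. u \<in> S \<Longrightarrow> v \<in> S \<Longrightarrow> u \<noteq> v \<Longrightarrow> f v < f u + g u \<bullet> (v - u)"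
    and v: "v \<in> S" "v \<noteq> x"
  shows "f v < f x"
proof -
  from lm obtain e where x: "x \<in> S" and e: "e > 0"
    and le: "\<And>y. y \<in> S \<Longrightarrow> 0 < norm (y - x) \<Longrightarrow> norm (y - x) < e \<Longrightarrow> f y \<le> f x"
    by (auto simp: local_max_on_def)
  define t where "t = min (1/2) (e / (2 * norm (v - x)))"
  have nv: "norm (v - x) > 0" using v by simp
  have t: "0 < t" "t < 1" using e nv by (auto simp: t_def)
  have "t * norm (v - x) \<le> e / (2 * norm (v - x)) * norm (v - x)"
    by (intro mult_right_mono) (auto simp: t_def)
  then have small: "t * norm (v - x) < e" using e nv by simp
  define y where "y = x + t *\<^sub>R (v - x)"
  have y: "y \<in> S"
    using convexD_alt[OF S x v(1), of t] t by (simp add: y_def algebra_simps)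
  have "y \<noteq> x" using t v by (simp add: y_def)
  have "y - v = (t - 1) *\<^sub>R (v - x)" by (simp add: y_def algebra_simps)
  then have "y \<noteq> v" using t v by auto
  have "f y \<le> f x" using le[OF y] small t nv by (simp add: y_def)
  have "(1 - t) * f x \<le> (1 - t) * (f y + g y \<bullet> (x - y))"
    using tangent[OF y x] \<open>y \<noteq> x\<close> t by (intro mult_left_mono) auto
  moreover have "t * f v < t * (f y + g y \<bullet> (v - y))"
    using tangent[OF y v(1)] \<open>y \<noteq> v\<close> t by simp
  moreover have "(1 - t) *\<^sub>R (x - y) + t *\<^sub>R (v - y) = 0"
    by (simp add: y_def algebra_simps)
  then have "(1 - t) * (g y \<bullet> (x - y)) + t * (g y \<bullet> (v - y)) = 0"
    by (metis inner_add_right inner_scaleR_right inner_zero_right)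
  ultimately have "(1 - t) * f x + t * f v < f y"
    by (simp add: algebra_simps)
  then have "t * f v < t * f x" using \<open>f y \<le> f x\<close> by (simp add: algebra_simps)
  then show ?thesis using t by simp
qed

locale regularized_motzkin_straus =
  fixes E :: "'n::finite \<Rightarrow> 'n \<Rightarrow> bool"
    and \<Phi> :: "real^'n \<Rightarrow> real"
    and grad :: "real^'n \<Rightarrow> real^'n"
    and hess :: "real^'n \<Rightarrow> real^'n^'n"
  assumes graph: "simple_graph E"
    and Phi_deriv: "\<And>x. x \<in> std_simplex \<Longrightarrow> (\<Phi> has_derivative (\<lambda>h. grad x \<bullet> h)) (at x)"
    and grad_deriv: "\<And>x. x \<in> std_simplex \<Longrightarrow> (grad has_derivative (\<lambda>h. hess x *v h)) (at x)"
    and hess_norm: "\<And>x. x \<in> std_simplex \<Longrightarrow> onorm (\<lambda>v. hess x *v v) < 2"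
    and Phi_permute: "\<And>x \<sigma>. x \<in> std_simplex \<Longrightarrow> \<sigma> permutes UNIV \<Longrightarrow> \<Phi> (perm_vec \<sigma> x) = \<Phi> x"
    and hess_pos_def: "\<And>x v. x \<in> std_simplex \<Longrightarrow> v \<noteq> 0 \<Longrightarrow> v \<bullet> (hess x *v v) > 0"
begin

lemma Phi_mean_value:
  assumes "x \<in> std_simplex" "y \<in> std_simplex"
  shows "\<exists>\<xi>\<in>std_simplex. \<Phi> y = \<Phi> x + grad x \<bullet> (y - x) + (y - x) \<bullet> (hess \<xi> *v (y - x)) / 2"
proof -
  have seg: "closed_segment x y \<subseteq> std_simplex"
    by (rule closed_segment_subset[OF assms convex_std_simplex])
  show ?thesis
    using second_order_mean_value[of x y \<Phi> grad "\<lambda>z h. hess z *v h"] seg Phi_deriv grad_deriv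
    by blast
qed

lemma hess_quadratic_less:
  assumes "\<xi> \<in> std_simplex" "v \<noteq> 0"
  shows "v \<bullet> (hess \<xi> *v v) < 2 * (v \<bullet> v)"
proof -
  have "v \<bullet> (hess \<xi> *v v) \<le> norm v * norm (hess \<xi> *v v)"
    using norm_cauchy_schwarz by blast
  also have "\<dots> \<le> norm v * (onorm (\<lambda>v. hess \<xi> *v v) * norm v)"
    by (intro mult_left_mono onorm) auto
  also have "\<dots> < norm v * (2 * norm v)"
    using hess_norm[OF assms(1)] assms(2) by (intro mult_strict_left_mono) auto
  also have "\<dots> = 2 * (v \<bullet> v)"
    by (simp add: power2_norm_eq_inner[symmetric] power2_eq_square)
  finally show ?thesis .
qed

lemma Phi_above_tangent:
  assumes "x \<in> std_simplex" "y \<in> std_simplex" "y \<noteq> x"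
  shows "\<Phi> x + grad x \<bullet> (y - x) < \<Phi> y"
  using Phi_mean_value[OF assms(1,2)] hess_pos_def[of _ "y - x"] assms(3) by force

lemma Phi_below_tangent_plus_square:
  assumes "x \<in> std_simplex" "y \<in> std_simplex" "y \<noteq> x"
  shows "\<Phi> y < \<Phi> x + grad x \<bullet> (y - x) + (y - x) \<bullet> (y - x)"
  using Phi_mean_value[OF assms(1,2)] hess_quadratic_less[of _ "y - x"] assms(3) by force

lemma Phi_tangent_bounds:
  assumes "x \<in> std_simplex" "y \<in> std_simplex"
  shows "\<Phi> x + grad x \<bullet> (y - x) \<le> \<Phi> y"
    and "\<Phi> y \<le> \<Phi> x + grad x \<bullet> (y - x) + (y - x) \<bullet> (y - x)"
  using Phi_above_tangent[OF assms] Phi_below_tangent_plus_square[OF assms]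
  by (cases "y = x"; force)+

definition objective :: "real^'n \<Rightarrow> real" where
  "objective x = x \<bullet> (adj_matrix E *v x) + \<Phi> x"

definition objective_grad :: "real^'n \<Rightarrow> real^'n" where
  "objective_grad x = 2 *\<^sub>R (adj_matrix E *v x) + grad x"

lemma objective_expand:
  "objective y = objective x + objective_grad x \<bullet> (y - x) + (y - x) \<bullet> (adj_matrix E *v (y - x))
     + (\<Phi> y - \<Phi> x - grad x \<bullet> (y - x))"
  using adj_quadratic_expand[OF graph, of y x]
  by (simp add: objective_def objective_grad_def inner_add_left)

lemma objective_strict_tangent_on_face:
  assumes "is_clique E T" "u \<in> simplex_face T" "v \<in> simplex_face T" "u \<noteq> v"
  shows "objective v < objective u + objective_grad u \<bullet> (v - u)"
proof -
  have u: "u \<in> std_simplex" and v: "v \<in> std_simplex" using assms simplex_face_subset by auto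
  have "(v - u) \<bullet> (adj_matrix E *v (v - u)) = - ((v - u) \<bullet> (v - u))"
    using adj_quadratic_on_clique[OF graph assms(1), of "v - u"] sum_diff_std_simplex[OF u v] assms(2,3)
    by (simp add: simplex_face_def)
  then show ?thesis
    using objective_expand[of v u] Phi_below_tangent_plus_square[OF u v] assms(4) by auto
qed

lemma local_max_strict_max_on_face:
  assumes "local_max_on objective std_simplex x" "is_clique E T" "x \<in> simplex_face T"
    and "v \<in> simplex_face T" "v \<noteq> x"
  shows "objective v < objective x"
  using local_max_on_imp_max_of_strict_tangent[OF convex_simplex_face
      local_max_on_subset[OF assms(1,3) simplex_face_subset]
      objective_strict_tangent_on_face[OF assms(2)] assms(4,5)] .

lemma objective_transpose_on_face:
  assumes "is_clique E T" "x \<in> simplex_face T" "i \<in> T" "j \<in> T"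
  shows "perm_vec (Transposition.transpose i j) x \<in> simplex_face T"
    and "objective (perm_vec (Transposition.transpose i j) x) = objective x"
proof -
  define p where "p = perm_vec (Transposition.transpose i j) x"
  have pm: "Transposition.transpose i j permutes UNIV" by (rule permutes_swap_id) auto
  have x: "x \<in> std_simplex" using assms(2) by (simp add: simplex_face_def)
  have sum_eq: "(\<Sum>k\<in>UNIV. g (p$k)) = (\<Sum>k\<in>UNIV. g (x$k))" for g :: "real \<Rightarrow> real"
    using sum.permute[OF pm, of "\<lambda>k. g (x$k)"] by (simp add: p_def perm_vec_def o_def)
  show p: "p \<in> simplex_face T"
    using perm_vec_in_std_simplex[OF pm x] assms
    by (auto simp: p_def simplex_face_def perm_vec_def Transposition.transpose_def)
  have "p \<bullet> (adj_matrix E *v p) = x \<bullet> (adj_matrix E *v x)"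
    using adj_quadratic_on_clique[OF graph assms(1), of p] adj_quadratic_on_clique[OF graph assms(1), of x]
      p assms(2) sum_eq[of "\<lambda>r. r"] sum_eq[of "\<lambda>r. r * r"]
    by (simp add: simplex_face_def inner_vec_def)
  moreover have "\<Phi> p = \<Phi> x" unfolding p_def by (rule Phi_permute[OF x pm])
  ultimately show "objective p = objective x" by (simp add: objective_def)
qed

lemma local_max_support_is_clique:
  assumes "local_max_on objective std_simplex x"
  shows "is_clique E {i. x$i \<noteq> 0}"
proof (rule ccontr)
  assume "\<not> is_clique E {i. x$i \<noteq> 0}"
  then obtain i j where ij: "x$i \<noteq> 0" "x$j \<noteq> 0" "i \<noteq> j" "\<not> E i j"
    by (auto simp: is_clique_def)
  from assms obtain e where x: "x \<in> std_simplex" and e: "e > 0"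
    and le: "\<And>y. y \<in> std_simplex \<Longrightarrow> 0 < norm (y - x) \<Longrightarrow> norm (y - x) < e \<Longrightarrow> objective y \<le> objective x"
    by (auto simp: local_max_on_def)
  have pos: "x$i > 0" "x$j > 0" using ij std_simplex_nonneg[OF x] by (auto simp: order_le_less)
  define w :: "real^'n" where "w = axis i 1 - axis j 1"
  have w_nth: "w$k = (if k = i then 1 else 0) - (if k = j then 1 else 0)" for k
    by (simp add: w_def axis_def)
  have "w$i = 1" using ij by (simp add: w_nth)
  then have w0: "w \<noteq> 0" by auto
  have norm_w: "norm w \<le> 2"
    using norm_triangle_ineq4[of "axis i (1::real)" "axis j 1"] by (simp add: w_def)
  define t where "t = min (min (x$i) (x$j)) (e / 4)"
  have t: "0 < t" "t \<le> x$i" "t \<le> x$j" "t \<le> e / 4" using pos e by (auto simp: t_def)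
  have grows: "objective x + s * (objective_grad x \<bullet> w) < objective x" if s: "\<bar>s\<bar> = t" for s
  proof -
    define y where "y = x + s *\<^sub>R w"
    have y: "y \<in> std_simplex"
      unfolding y_def w_def using axis_diff_in_std_simplex[OF x ij(3)] s t by simp
    have "y \<noteq> x" using w0 s t by (simp add: y_def)
    have quad: "(y - x) \<bullet> (adj_matrix E *v (y - x)) = 0"
      using ij graph by (intro adj_quadratic_on_independent_set)
        (auto simp: y_def w_nth simple_graph_def split: if_splits)
    have "norm (y - x) = t * norm w" using s by (simp add: y_def)
    also have "\<dots> \<le> e / 4 * 2" using t norm_w by (intro mult_mono) auto
    finally have "objective y \<le> objective x" using le[OF y] \<open>y \<noteq> x\<close> e by simp
    moreover have "objective y = objective x + s * (objective_grad x \<bullet> w) + (\<Phi> y - \<Phi> x - grad x \<bullet> (y - x))"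
      using objective_expand[of y x, unfolded quad] by (simp add: y_def)
    then have "objective x + s * (objective_grad x \<bullet> w) < objective y"
      using Phi_above_tangent[OF x y \<open>y \<noteq> x\<close>] by linarith
    ultimately show ?thesis by simp
  qed
  show False using grows[of t] grows[of "- t"] t by simp
qed

lemma local_max_constant_on_clique:
  assumes "local_max_on objective std_simplex x" "is_clique E T" "x \<in> simplex_face T" "i \<in> T" "j \<in> T"
  shows "x$i = x$j"
proof -
  define p where "p = perm_vec (Transposition.transpose i j) x"
  have "p = x"
  proof (rule ccontr)
    assume "p \<noteq> x"
    then show False
      using local_max_strict_max_on_face[OF assms(1-3), of p] objective_transpose_on_face[OF assms(2-5)]
      by (simp add: p_def)
  qed
  then have "x$i = p$i" by simp
  then show ?thesis by (simp add: p_def perm_vec_def)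
qed

lemma local_max_is_clique_vec:
  assumes lm: "local_max_on objective std_simplex x"
  shows "\<exists>C. maximal_clique E C \<and> x = clique_vec C"
proof -
  define S where "S = {i. x$i \<noteq> 0}"
  have x: "x \<in> std_simplex" using lm by (simp add: local_max_on_def)
  have S: "is_clique E S" using local_max_support_is_clique[OF lm] by (simp add: S_def)
  have face: "x \<in> simplex_face D" if "S \<subseteq> D" for D
    using x that by (auto simp: simplex_face_def S_def)
  have "x$i = x$j" if "x$i \<noteq> 0" "x$j \<noteq> 0" for i j
    by (rule local_max_constant_on_clique[OF lm S face]) (use that in \<open>auto simp: S_def\<close>)
  then have "x = clique_vec S"
    using std_simplex_constant_on_support[OF x] by (simp add: S_def)
  moreover have "maximal_clique E S"
  proof (unfold maximal_clique_def, intro conjI notI S)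
    assume "\<exists>D. is_clique E D \<and> S \<subset> D"
    then obtain D k where D: "is_clique E D" "S \<subset> D" "k \<in> D" "k \<notin> S" by blast
    obtain i where i: "i \<in> S" using std_simplex_support_nonempty[OF x] by (auto simp: S_def)
    have "x$k = x$i"
      using local_max_constant_on_clique[OF lm D(1) face D(3), of i] D(2) i by blast
    then show False using i D(4) by (simp add: S_def)
  qed
  ultimately show ?thesis by blast
qed

lemma grad_orthogonal_to_symmetric_direction:
  assumes x: "x \<in> std_simplex" and r: "r > 0"
    and sym: "\<And>t. 0 < t \<Longrightarrow> t \<le> r \<Longrightarrow>
      x + t *\<^sub>R w \<in> std_simplex \<and> x - t *\<^sub>R w \<in> std_simplex \<and> \<Phi> (x + t *\<^sub>R w) = \<Phi> (x - t *\<^sub>R w)"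
  shows "grad x \<bullet> w = 0"
proof -
  define G where "G = grad x \<bullet> w"
  have bound: "2 * \<bar>G\<bar> \<le> t * (w \<bullet> w)" if t: "0 < t" "t \<le> r" for t
  proof -
    have p: "x + t *\<^sub>R w \<in> std_simplex" and m: "x - t *\<^sub>R w \<in> std_simplex"
      and eq: "\<Phi> (x + t *\<^sub>R w) = \<Phi> (x - t *\<^sub>R w)" using sym[OF t] by auto
    have "\<Phi> x + t * G \<le> \<Phi> (x + t *\<^sub>R w)" "\<Phi> (x + t *\<^sub>R w) \<le> \<Phi> x + t * G + t * t * (w \<bullet> w)"
      using Phi_tangent_bounds[OF x p] by (simp_all add: G_def)
    moreover have "\<Phi> x - t * G \<le> \<Phi> (x - t *\<^sub>R w)" "\<Phi> (x - t *\<^sub>R w) \<le> \<Phi> x - t * G + t * t * (w \<bullet> w)"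
      using Phi_tangent_bounds[OF x m] by (simp_all add: G_def)
    ultimately have "t * (2 * \<bar>G\<bar>) \<le> t * (t * (w \<bullet> w))"
      using eq by (simp add: abs_if algebra_simps)
    then show ?thesis using t by simp
  qed
  have "2 * \<bar>G\<bar> \<le> 0"
  proof (rule field_le_epsilon)
    fix e :: real assume "e > 0"
    have ww: "0 < w \<bullet> w + 1" by (simp add: add_nonneg_pos)
    define t where "t = min r (e / (w \<bullet> w + 1))"
    have "0 < t" "t \<le> r" using r \<open>e > 0\<close> ww by (auto simp: t_def)
    have "t * (w \<bullet> w) \<le> e / (w \<bullet> w + 1) * (w \<bullet> w + 1)"
      using \<open>0 < t\<close> by (intro mult_mono) (auto simp: t_def)
    then show "2 * \<bar>G\<bar> \<le> 0 + e"
      using bound[OF \<open>0 < t\<close> \<open>t \<le> r\<close>] ww by simp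
  qed
  then show ?thesis by (simp add: G_def)
qed

lemma grad_clique_vec_eq:
  assumes "i \<in> C" "j \<in> C"
  shows "grad (clique_vec C) $ i = grad (clique_vec C) $ j"
proof (cases "i = j")
  case False
  define x where "x = clique_vec C"
  define w :: "real^'n" where "w = axis i 1 - axis j 1"
  have C: "C \<noteq> {}" using assms by auto
  have x: "x \<in> std_simplex" using clique_vec_in_std_simplex[OF C] by (simp add: x_def)
  have entries: "x$i = 1 / real (card C)" "x$j = 1 / real (card C)"
    using assms by (simp_all add: x_def clique_vec_def)
  have "grad x \<bullet> w = 0"
  proof (rule grad_orthogonal_to_symmetric_direction[OF x, of "1 / real (card C)"])
    fix t :: real assume t: "0 < t" "t \<le> 1 / real (card C)"
    have p: "x + t *\<^sub>R w \<in> std_simplex" and m: "x - t *\<^sub>R w \<in> std_simplex"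
      using axis_diff_in_std_simplex[OF x False, of t] axis_diff_in_std_simplex[OF x False, of "- t"]
        t entries by (simp_all add: w_def)
    have "perm_vec (Transposition.transpose i j) (x + t *\<^sub>R w) = x - t *\<^sub>R w"
      using assms False
      by (auto simp: vec_eq_iff perm_vec_def w_def x_def clique_vec_def axis_def Transposition.transpose_def)
    then have "\<Phi> (x - t *\<^sub>R w) = \<Phi> (x + t *\<^sub>R w)"
      using Phi_permute[OF p, of "Transposition.transpose i j"] permutes_swap_id[of i UNIV j] by simp
    then show "x + t *\<^sub>R w \<in> std_simplex \<and> x - t *\<^sub>R w \<in> std_simplex
        \<and> \<Phi> (x + t *\<^sub>R w) = \<Phi> (x - t *\<^sub>R w)"
      using p m by simp
  qed (use C in \<open>simp add: card_gt_0_iff\<close>)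
  then show ?thesis by (simp add: x_def w_def inner_diff_right inner_axis)
qed simp

lemma grad_clique_vec_less:
  assumes "i \<in> C" "k \<notin> C"
  shows "grad (clique_vec C) $ k < grad (clique_vec C) $ i"
proof -
  define x where "x = clique_vec C"
  define N where "N = real (card C)"
  have C: "C \<noteq> {}" using assms by auto
  then have "N > 0" by (simp add: N_def card_gt_0_iff)
  have x: "x \<in> std_simplex" using clique_vec_in_std_simplex[OF C] by (simp add: x_def)
  define p where "p = perm_vec (Transposition.transpose i k) x"
  have pm: "Transposition.transpose i k permutes UNIV" by (rule permutes_swap_id) auto
  have p: "p \<in> std_simplex" using perm_vec_in_std_simplex[OF pm x] by (simp add: p_def)
  have diff: "p - x = (1 / N) *\<^sub>R (axis k 1 - axis i 1)"
    using assms by (auto simp: vec_eq_iff p_def perm_vec_def x_def N_def clique_vec_def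
        Transposition.transpose_def axis_def)
  then have "(p - x) $ k = 1 / N" using assms by (auto simp: axis_def)
  then have "p \<noteq> x" using \<open>N > 0\<close> by auto
  have "\<Phi> x + grad x \<bullet> (p - x) < \<Phi> p" by (rule Phi_above_tangent[OF x p \<open>p \<noteq> x\<close>])
  moreover have "\<Phi> p = \<Phi> x" unfolding p_def by (rule Phi_permute[OF x pm])
  ultimately have "(grad x $ k - grad x $ i) / N < 0"
    by (simp add: diff inner_diff_right inner_axis)
  then show ?thesis using \<open>N > 0\<close> by (simp add: x_def divide_less_0_iff)
qed

lemma objective_grad_clique_vec:
  "objective_grad (clique_vec C) $ l
     = 2 * real (card {j\<in>C. E l j}) / real (card C) + grad (clique_vec C) $ l"
  by (simp add: objective_grad_def adj_matrix_clique_vec)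

lemma objective_grad_clique_vec_eq:
  assumes "is_clique E C" "i \<in> C" "j \<in> C"
  shows "objective_grad (clique_vec C) $ i = objective_grad (clique_vec C) $ j"
  using card_neighbours_in_clique[OF graph assms(1)] assms grad_clique_vec_eq[OF assms(2,3)]
  by (simp add: objective_grad_clique_vec)

lemma objective_grad_clique_vec_less:
  assumes "maximal_clique E C" "i \<in> C" "k \<notin> C"
  shows "objective_grad (clique_vec C) $ k < objective_grad (clique_vec C) $ i"
proof -
  have C: "is_clique E C" using assms(1) by (simp add: maximal_clique_def)
  obtain j where j: "j \<in> C" "\<not> E k j"
  proof (rule ccontr)
    assume "\<not> thesis"
    then have "is_clique E (insert k C)"
      using that C graph by (auto simp: is_clique_def simple_graph_def)
    then show False using assms(1,3) by (auto simp: maximal_clique_def)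
  qed
  have "card {j\<in>C. E k j} \<le> card {j\<in>C. E i j}"
    using card_neighbours_missing[where E = E and l = k, OF j]
      card_neighbours_in_clique[OF graph C assms(2)] by simp
  then have "2 * real (card {j\<in>C. E k j}) / real (card C)
      \<le> 2 * real (card {j\<in>C. E i j}) / real (card C)"
    by (simp add: divide_right_mono)
  then show ?thesis
    using grad_clique_vec_less[OF assms(2,3)] by (simp add: objective_grad_clique_vec)
qed

lemma objective_less_near_face:
  assumes C: "is_clique E C" and x: "x \<in> simplex_face C"
    and on: "\<And>l. l \<in> C \<Longrightarrow> objective_grad x $ l = \<mu>"
    and off: "\<And>k. k \<notin> C \<Longrightarrow> objective_grad x $ k \<le> \<mu> - \<delta>"
    and y: "y \<in> std_simplex" "y \<noteq> x"
    and close: "3 * real CARD('n) * norm (y - x) \<le> \<delta>"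
  shows "objective y < objective x"
proof -
  define d where "d = y - x"
  define s where "s = (\<Sum>l\<in>-C. d$l)"
  define T where "T = (\<Sum>l\<in>UNIV. \<bar>d$l\<bar>)"
  have x': "x \<in> std_simplex" using x simplex_face_subset by auto
  have d_off: "0 \<le> d$k" if "k \<notin> C" for k
    using that x std_simplex_nonneg[OF y(1), of k] by (simp add: d_def simplex_face_def)
  have sum_d: "(\<Sum>l\<in>UNIV. d$l) = 0" using sum_diff_std_simplex[OF x' y(1)] by (simp add: d_def)
  have "(\<Sum>l\<in>UNIV. d$l) = (\<Sum>l\<in>C. d$l) + s"
    unfolding s_def by (subst sum.union_disjoint[symmetric]) (auto simp: Compl_partition)
  then have sum_C: "(\<Sum>l\<in>C. d$l) = - s" using sum_d by simp
  have s_abs: "(\<Sum>l\<in>-C. \<bar>d$l\<bar>) = s" unfolding s_def using d_off by (intro sum.cong) auto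
  have "0 \<le> s" unfolding s_def using d_off by (intro sum_nonneg) auto
  have "s \<le> T" unfolding T_def s_abs[symmetric] by (intro sum_mono2) auto
  have "T \<le> real CARD('n) * norm d"
    using sum_bounded_above[of UNIV "\<lambda>l. \<bar>d$l\<bar>" "norm d"] by (simp add: T_def component_le_norm_cart)
  then have "3 * T \<le> \<delta>" using close by (simp add: d_def)
  have "objective_grad x \<bullet> d \<le> - \<delta> * s"
    using inner_le_of_gap[OF on off d_off] sum_d by (simp add: s_def)
  moreover have "d \<bullet> (adj_matrix E *v d) + d \<bullet> d \<le> s\<^sup>2 + 2 * s * T"
    using adj_quadratic_clique_bound[OF graph C, of d] sum_C s_abs by (simp add: T_def)
  moreover have "\<Phi> y - \<Phi> x - grad x \<bullet> d < d \<bullet> d"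
    using Phi_below_tangent_plus_square[OF x' y] by (simp add: d_def)
  ultimately have "objective y < objective x - \<delta> * s + (s\<^sup>2 + 2 * s * T)"
    using objective_expand[of y x] by (simp add: d_def)
  also have "s\<^sup>2 + 2 * s * T \<le> s * (3 * T)"
    using mult_right_mono[OF \<open>s \<le> T\<close> \<open>0 \<le> s\<close>] by (simp add: power2_eq_square algebra_simps)
  also have "s * (3 * T) \<le> s * \<delta>"
    using \<open>3 * T \<le> \<delta>\<close> \<open>0 \<le> s\<close> by (rule mult_left_mono)
  finally show ?thesis by simp
qed

lemma maximal_clique_strict_local_max:
  assumes mc: "maximal_clique E C"
  shows "strict_local_max_on objective std_simplex (clique_vec C)"
proof -
  define x where "x = clique_vec C"
  have C: "is_clique E C" using mc by (simp add: maximal_clique_def)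
  obtain i where i: "i \<in> C" using maximal_clique_nonempty[OF mc] by blast
  have x: "x \<in> simplex_face C"
    using clique_vec_in_std_simplex[of C] i by (auto simp: simplex_face_def x_def clique_vec_def)
  define \<mu> where "\<mu> = objective_grad x $ i"
  define \<delta> where "\<delta> = Min (insert 1 ((\<lambda>k. \<mu> - objective_grad x $ k) ` (- C)))"
  have "\<delta> > 0"
    using objective_grad_clique_vec_less[OF mc i] by (simp add: \<delta>_def \<mu>_def x_def)
  have on: "objective_grad x $ l = \<mu>" if "l \<in> C" for l
    using objective_grad_clique_vec_eq[OF C that i] by (simp add: \<mu>_def x_def)
  have off: "objective_grad x $ k \<le> \<mu> - \<delta>" if "k \<notin> C" for k
  proof -
    have "\<delta> \<le> \<mu> - objective_grad x $ k" unfolding \<delta>_def by (rule Min_le) (use that in auto)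
    then show ?thesis by simp
  qed
  define \<epsilon> where "\<epsilon> = \<delta> / (3 * real CARD('n))"
  have "\<epsilon> > 0" using \<open>\<delta> > 0\<close> by (simp add: \<epsilon>_def)
  have "objective y < objective x"
    if "y \<in> std_simplex" "0 < norm (y - x)" "norm (y - x) < \<epsilon>" for y
    using objective_less_near_face[OF C x on off, of y] that by (simp add: \<epsilon>_def field_simps)
  then show ?thesis
    using x \<open>\<epsilon> > 0\<close> simplex_face_subset by (auto simp: strict_local_max_on_def x_def)
qed

end

theorem proposition5:
  fixes E :: "'n::finite \<Rightarrow> 'n \<Rightarrow> bool"
    and \<Phi> :: "real^'n \<Rightarrow> real"
    and X :: "(real^'n) set"
    and grad :: "real^'n \<Rightarrow> real^'n"
    and hess :: "real^'n \<Rightarrow> real^'n^'n"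
  assumes graph: "simple_graph E"
    and X_open: "open X" and X_sup: "std_simplex \<subseteq> X"
    and grad: "\<And>x. x \<in> X \<Longrightarrow> (\<Phi> has_derivative (\<lambda>h. grad x \<bullet> h)) (at x)"
    and hess: "\<And>x. x \<in> X \<Longrightarrow> (grad has_derivative (\<lambda>h. hess x *v h)) (at x)"
    and hess_cont: "continuous_on X hess"
    and C1: "\<And>x v. x \<in> std_simplex \<Longrightarrow> v \<bullet> (hess x *v v) \<ge> 0"
    and C2: "\<And>x. x \<in> std_simplex \<Longrightarrow> onorm (\<lambda>v. hess x *v v) < 2"
    and C3: "\<And>x \<sigma>. x \<in> std_simplex \<Longrightarrow> \<sigma> permutes (UNIV :: 'n set) \<Longrightarrow>
               \<Phi> (perm_vec \<sigma> x) = \<Phi> x"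
    and posdef: "\<And>x v. x \<in> std_simplex \<Longrightarrow> v \<noteq> 0 \<Longrightarrow> v \<bullet> (hess x *v v) > 0"
  defines "f \<equiv> (\<lambda>x. x \<bullet> (adj_matrix E *v x) + \<Phi> x)"
  shows "(\<forall>x\<in>std_simplex. local_max_on f std_simplex x \<longleftrightarrow>
            (\<exists>C. maximal_clique E C \<and> x = clique_vec C))
         \<and> (\<forall>x. local_max_on f std_simplex x \<longrightarrow> strict_local_max_on f std_simplex x)"
proof -
  interpret regularized_motzkin_straus E \<Phi> grad hess
    using graph X_sup grad hess C2 C3 posdef by unfold_locales auto
  have "f = objective" by (simp add: f_def fun_eq_iff objective_def)
  then show ?thesis
    using local_max_is_clique_vec maximal_clique_strict_local_max strict_local_max_imp_local_max
    by blast
qed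

end
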